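(* Any quantum algorithm that, with probability at least $\frac{2}{3}$, outputs the LZ77 factorization of every input text $T[1..n]$ in the class of texts with $z=\Theta(1)$ (respectively, with $z=\Theta(n)$) LZ77 factors requires $\Omega(\sqrt{zn})$ input queries. Likewise, any quantum algorithm that, with probability at least $\frac{2}{3}$, outputs the run-length encoded BWT of every input text in the class of texts with $r=\Theta(1)$ (respectively, $r=\Theta(n)$) BWT runs requires $\Omega(\sqrt{rn})$ input queries.
   Context: Model: the text $T[1..n]$ over an integer alphabet is accessible only through a quantum oracle which on query $i$ returns $T[i]$; the query complexity is the number of oracle calls. LZ77 factorization (greedy): start with $i=1$; while $i\le n$: if $T[i]$ is the first occurrence of its symbol, $T[i]$ is the next factor and $i\gets i+1$; otherwise take the largest $j\ge i$ such that $T[i..j]$ occurs in $T$ starting at some position $i'<i$, make $T[i..j]$ the next factor and set $i\gets j+1$. $z$ is the number of factors. BWT: with $\mathrm{SA}$ the suffix array of $T$ (so $T[\mathrm{SA}[i]..n]$ is the $i$-th smallest suffix lexicographically), $\mathrm{BWT}[i]=T[\mathrm{SA}[i]-1]$ (with $T[0]=T[n]$), equivalently the last column of the matrix of lexicographically sorted cyclic rotations of $T$. $r$ is the number of maximal runs of equal symbols in $\mathrm{BWT}$; the run-length encoded BWT lists these runs as (symbol, length) pairs. *)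

theory Defs
  imports Complex_Main "HOL-Library.List_Lexorder"
begin

text \<open>Texts are lists of naturals, 0-based: T[1..n] of the paper is the list T with T ! (i-1) = T[i].\<close>

definition texts :: "nat \<Rightarrow> nat \<Rightarrow> nat list set" where
  "texts \<sigma> n = {T. length T = n \<and> set T \<subseteq> {0..<\<sigma>}}"

definition lz_len :: "nat list \<Rightarrow> nat \<Rightarrow> nat" where
  "lz_len T i = (if T ! i \<notin> set (take i T) then 1
     else (GREATEST l. 1 \<le> l \<and> i + l \<le> length T \<and>
             (\<exists>i' < i. i' + l \<le> length T \<and> take l (drop i' T) = take l (drop i T))))"

fun lz_aux :: "nat \<Rightarrow> nat list \<Rightarrow> nat \<Rightarrow> nat list list" where
  "lz_aux 0 T i = []"
| "lz_aux (Suc k) T i = (if length T \<le> i then []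
     else (let l = max 1 (lz_len T i) in take l (drop i T) # lz_aux k T (i + l)))"

definition lz77 :: "nat list \<Rightarrow> nat list list" where
  "lz77 T = lz_aux (length T) T 0"

definition lz_z :: "nat list \<Rightarrow> nat" where
  "lz_z T = length (lz77 T)"

text \<open>Suffixes sorted lexicographically (list order of List_Lexorder, a proper prefix is smaller);
  the suffix of length s starts at 0-based position n - s; BWT[i] = T[SA[i]-1] with T[0] = T[n].\<close>
definition bwt :: "nat list \<Rightarrow> nat list" where
  "bwt T = (let n = length T in
     map (\<lambda>s. let p = n - length s in if p = 0 then T ! (n - 1) else T ! (p - 1))
         (sort (map (\<lambda>i. drop i T) [0..<n])))"

fun rle :: "nat list \<Rightarrow> (nat \<times> nat) list" where
  "rle [] = []"
| "rle (x # xs) = (case rle xs of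
       [] \<Rightarrow> [(x, 1)]
     | (y, k) # rs \<Rightarrow> (if x = y then (y, Suc k) # rs else (x, 1) # (y, k) # rs))"

definition rlbwt :: "nat list \<Rightarrow> (nat \<times> nat) list" where
  "rlbwt T = rle (bwt T)"

definition bwt_r :: "nat list \<Rightarrow> nat" where
  "bwt_r T = length (rlbwt T)"

text \<open>Computational basis states |i, b, w\<rangle>: query index i < n, answer register b < \<sigma>,
  workspace w < d.  Operators are matrices indexed by basis states.\<close>

type_synonym bstate = "nat \<times> nat \<times> nat"
type_synonym qvec = "bstate \<Rightarrow> complex"
type_synonym qop = "bstate \<Rightarrow> bstate \<Rightarrow> complex"

definition basis :: "nat \<Rightarrow> nat \<Rightarrow> nat \<Rightarrow> bstate set" where
  "basis n \<sigma> d = {0..<n} \<times> {0..<\<sigma>} \<times> {0..<d}"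

definition apply_op :: "bstate set \<Rightarrow> qop \<Rightarrow> qvec \<Rightarrow> qvec" where
  "apply_op B U v = (\<lambda>x. if x \<in> B then (\<Sum>y\<in>B. U x y * v y) else 0)"

definition is_unitary :: "bstate set \<Rightarrow> qop \<Rightarrow> bool" where
  "is_unitary B U = (\<forall>x\<in>B. \<forall>x'\<in>B.
      (\<Sum>y\<in>B. cnj (U y x) * U y x') = (if x = x' then 1 else 0))"

text \<open>Standard query operator O_T |i, b, w\<rangle> = |i, (b + T[i]) mod \<sigma>, w\<rangle>.\<close>
definition query_op :: "nat \<Rightarrow> nat list \<Rightarrow> qvec \<Rightarrow> qvec" where
  "query_op \<sigma> T v = (\<lambda>(i, b, w).
      if i < length T \<and> b < \<sigma> then v (i, (b + \<sigma> - T ! i mod \<sigma>) mod \<sigma>, w) else 0)"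

record 'o qalg =
  wdim :: nat
  nqueries :: nat
  unitaries :: "nat \<Rightarrow> qop"
  outp :: "bstate \<Rightarrow> 'o"

definition valid_qalg :: "nat \<Rightarrow> nat \<Rightarrow> 'o qalg \<Rightarrow> bool" where
  "valid_qalg n \<sigma> A = (1 \<le> wdim A \<and>
     (\<forall>k \<le> nqueries A. is_unitary (basis n \<sigma> (wdim A)) (unitaries A k)))"

definition init_state :: qvec where
  "init_state = (\<lambda>x. if x = (0, 0, 0) then 1 else 0)"

fun run_state :: "nat \<Rightarrow> nat \<Rightarrow> 'o qalg \<Rightarrow> nat list \<Rightarrow> nat \<Rightarrow> qvec" where
  "run_state n \<sigma> A T 0 = apply_op (basis n \<sigma> (wdim A)) (unitaries A 0) init_state"
| "run_state n \<sigma> A T (Suc k) =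
     apply_op (basis n \<sigma> (wdim A)) (unitaries A (Suc k)) (query_op \<sigma> T (run_state n \<sigma> A T k))"

definition final_state :: "nat \<Rightarrow> nat \<Rightarrow> 'o qalg \<Rightarrow> nat list \<Rightarrow> qvec" where
  "final_state n \<sigma> A T = run_state n \<sigma> A T (nqueries A)"

definition prob_output :: "nat \<Rightarrow> nat \<Rightarrow> 'o qalg \<Rightarrow> nat list \<Rightarrow> 'o \<Rightarrow> real" where
  "prob_output n \<sigma> A T out =
     (\<Sum>x\<in>basis n \<sigma> (wdim A) \<inter> {x. outp A x = out}. (cmod (final_state n \<sigma> A T x))\<^sup>2)"

definition computes :: "nat \<Rightarrow> nat \<Rightarrow> 'o qalg \<Rightarrow> (nat list \<Rightarrow> 'o) \<Rightarrow> nat list set \<Rightarrow> bool" where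
  "computes n \<sigma> A f S = (valid_qalg n \<sigma> A \<and> (\<forall>T\<in>S. prob_output n \<sigma> A T (f T) \<ge> 2/3))"

end

theory Submission
  imports Defs "HOL-Library.Multiset"
begin

text \<open>
  The bounds come from Ambainis' adversary method. If an algorithm is correct with probability
  at least 2/3 on two inputs with different outputs, its two final states have inner product at
  most 17/18 in absolute value. The states start out equal, and a query changes their inner
  product only through the amplitude on positions where the two inputs differ. Summing over a
  relation R of such input pairs, in which each input has at most one partner differing at any
  fixed position, t queries can account for at most 18 t (l |Dom R| + |Ran R| / l) pairs, for
  every weight l > 0.

  The zero text, paired with its n
  perturbations carrying a single 1, forces t = Omega(sqrt n); these texts have at most three
  runs, hence z <= 6 and r <= 3. Texts with pairwise distinct markers at the even positions and
  free bits at the odd ones, paired by flipping one bit, force t = Omega(n); they have at least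
  n/2 distinct symbols, which bounds both z and r from below. Both the LZ77 factorization and
  the run-length encoded BWT determine the multiset of symbols of the text, so they separate
  all these pairs.
\<close>


section \<open>Quantum query algorithms\<close>

definition inner_on :: "bstate set \<Rightarrow> qvec \<Rightarrow> qvec \<Rightarrow> complex" where
  "inner_on B v w = (\<Sum>x\<in>B. cnj (v x) * w x)"

definition sqnorm_on :: "bstate set \<Rightarrow> qvec \<Rightarrow> real" where
  "sqnorm_on B v = (\<Sum>x\<in>B. (cmod (v x))\<^sup>2)"

definition query_mass :: "nat \<Rightarrow> nat \<Rightarrow> qvec \<Rightarrow> nat \<Rightarrow> real" where
  "query_mass \<sigma> d v i = (\<Sum>\<beta><\<sigma>. \<Sum>\<omega><d. (cmod (v (i, \<beta>, \<omega>)))\<^sup>2)"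

lemma inner_on_self: "inner_on B v v = of_real (sqnorm_on B v)"
  unfolding inner_on_def sqnorm_on_def
  by (simp add: complex_norm_square mult.commute del: of_real_power)

lemma inner_on_apply_op:
  assumes "finite B" "is_unitary B U"
  shows "inner_on B (apply_op B U v) (apply_op B U w) = inner_on B v w"
proof -
  have "inner_on B (apply_op B U v) (apply_op B U w) =
      (\<Sum>x\<in>B. \<Sum>y\<in>B. \<Sum>y'\<in>B. cnj (v y) * w y' * (cnj (U x y) * U x y'))"
    unfolding inner_on_def apply_op_def
    by (simp add: sum_product sum_distrib_left mult_ac)
  also have "\<dots> = (\<Sum>y\<in>B. \<Sum>y'\<in>B. \<Sum>x\<in>B. cnj (v y) * w y' * (cnj (U x y) * U x y'))"
    by (subst sum.swap) (rule sum.cong[OF refl], rule sum.swap)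
  also have "\<dots> = (\<Sum>y\<in>B. \<Sum>y'\<in>B. cnj (v y) * w y' * (\<Sum>x\<in>B. cnj (U x y) * U x y'))"
    by (simp add: sum_distrib_left)
  also have "\<dots> = (\<Sum>y\<in>B. \<Sum>y'\<in>B. if y = y' then cnj (v y) * w y' else 0)"
    using assms(2) unfolding is_unitary_def by (intro sum.cong refl) simp
  also have "\<dots> = inner_on B v w"
    unfolding inner_on_def using assms(1) by simp
  finally show ?thesis .
qed

lemma sqnorm_on_apply_op:
  assumes "finite B" "is_unitary B U"
  shows "sqnorm_on B (apply_op B U v) = sqnorm_on B v"
  using inner_on_apply_op[OF assms, of v v] by (simp add: inner_on_self)

lemma finite_basis: "finite (basis n \<sigma> d)"
  unfolding basis_def by simp

lemma sum_basis: "(\<Sum>x\<in>basis n \<sigma> d. f x) = (\<Sum>i<n. \<Sum>\<beta><\<sigma>. \<Sum>\<omega><d. f (i, \<beta>, \<omega>))"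
  unfolding basis_def atLeast0LessThan by (simp add: sum.cartesian_product split_def)

lemma sqnorm_on_basis: "sqnorm_on (basis n \<sigma> d) v = (\<Sum>i<n. query_mass \<sigma> d v i)"
  unfolding sqnorm_on_def query_mass_def by (rule sum_basis)

lemma query_mass_nonneg: "0 \<le> query_mass \<sigma> d v i"
  unfolding query_mass_def by (intro sum_nonneg) auto

lemma mult_le_weighted_mean_sq:
  fixes x y l :: real
  assumes "0 < l"
  shows "x * y \<le> (l * x\<^sup>2 + y\<^sup>2 / l) / 2"
proof -
  have "0 \<le> (l * x - y)\<^sup>2 / l" using assms by simp
  also have "\<dots> = l * x\<^sup>2 - 2 * (x * y) + y\<^sup>2 / l"
    using assms by (simp add: power2_eq_square field_simps)
  finally show ?thesis by simp
qed

lemma norm_sum_cnj_mult_le: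
  fixes a b :: "'i \<Rightarrow> complex"
  assumes "0 < l"
  shows "cmod (\<Sum>x\<in>S. cnj (a x) * b x)
    \<le> (l * (\<Sum>x\<in>S. (cmod (a x))\<^sup>2) + (\<Sum>x\<in>S. (cmod (b x))\<^sup>2) / l) / 2"
proof -
  have "cmod (\<Sum>x\<in>S. cnj (a x) * b x) \<le> (\<Sum>x\<in>S. cmod (a x) * cmod (b x))"
    by (rule order_trans[OF norm_sum]) (simp add: norm_mult)
  also have "\<dots> \<le> (\<Sum>x\<in>S. (l * (cmod (a x))\<^sup>2 + (cmod (b x))\<^sup>2 / l) / 2)"
    by (intro sum_mono mult_le_weighted_mean_sq assms)
  also have "\<dots> = (l * (\<Sum>x\<in>S. (cmod (a x))\<^sup>2) + (\<Sum>x\<in>S. (cmod (b x))\<^sup>2) / l) / 2"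
    by (simp add: sum_divide_distrib[symmetric] sum_distrib_left sum.distrib)
  finally show ?thesis .
qed

lemma inj_on_add_mod: "inj_on (\<lambda>\<beta>. (\<beta> + c) mod s) {..<s::nat}"
proof (rule inj_onI)
  fix a b assume ab: "a \<in> {..<s}" "b \<in> {..<s}" and "(a + c) mod s = (b + c) mod s"
  then obtain q1 q2 where "a + c + s * q1 = b + c + s * q2" by (auto simp: nat_mod_eq_iff)
  then have "a mod s = b mod s" by (auto simp: nat_mod_eq_iff)
  then show "a = b" using ab by simp
qed

lemma sum_add_mod: "(\<Sum>\<beta><s::nat. g ((\<beta> + c) mod s)) = (\<Sum>\<beta><s. g \<beta>)"
proof -
  have "(\<lambda>\<beta>. (\<beta> + c) mod s) ` {..<s} = {..<s}"
    by (rule endo_inj_surj[OF _ _ inj_on_add_mod]) auto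
  then show ?thesis using sum.reindex[OF inj_on_add_mod, of g c s] by (simp add: comp_def)
qed

lemma norm_query_block_le:
  assumes "0 < l"
  shows "cmod (\<Sum>\<beta><\<sigma>. \<Sum>\<omega><d. cnj (v (i, (\<beta> + c) mod \<sigma>, \<omega>)) * w (i, (\<beta> + c') mod \<sigma>, \<omega>))
    \<le> (l * query_mass \<sigma> d v i + query_mass \<sigma> d w i / l) / 2"
proof -
  have mass: "(\<Sum>p\<in>{..<\<sigma>} \<times> {..<d}. (cmod (u (i, (fst p + e) mod \<sigma>, snd p)))\<^sup>2)
      = query_mass \<sigma> d u i" for u e
    using sum_add_mod[where g = "\<lambda>\<beta>. \<Sum>\<omega><d. (cmod (u (i, \<beta>, \<omega>)))\<^sup>2" and s = \<sigma> and c = e]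
    by (simp add: query_mass_def sum.cartesian_product split_def)
  show ?thesis
    using norm_sum_cnj_mult_le[OF assms, of "\<lambda>(\<beta>, \<omega>). v (i, (\<beta> + c) mod \<sigma>, \<omega>)"
        "\<lambda>(\<beta>, \<omega>). w (i, (\<beta> + c') mod \<sigma>, \<omega>)" "{..<\<sigma>} \<times> {..<d}"]
    by (simp add: mass sum.cartesian_product split_def)
qed

lemma inner_on_query_op_diff:
  assumes "length T1 = n" "length T2 = n" "0 < l"
  shows "cmod (inner_on (basis n \<sigma> d) (query_op \<sigma> T1 v) (query_op \<sigma> T2 w)
      - inner_on (basis n \<sigma> d) v w)
    \<le> (\<Sum>i | i < n \<and> T1 ! i \<noteq> T2 ! i. l * query_mass \<sigma> d v i + query_mass \<sigma> d w i / l)"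
proof -
  \<comment> \<open>\<open>G i\<close> and \<open>H i\<close> are the contributions of query position \<open>i\<close> after and before the
    queries; if \<open>T1 ! i = T2 ! i\<close> they differ only by a common cyclic shift of the answer register.\<close>
  define c where "c T i = \<sigma> - T ! i mod \<sigma>" for T i
  define G where "G i = (\<Sum>\<beta><\<sigma>. \<Sum>\<omega><d.
      cnj (v (i, (\<beta> + c T1 i) mod \<sigma>, \<omega>)) * w (i, (\<beta> + c T2 i) mod \<sigma>, \<omega>))" for i
  define H where "H i = (\<Sum>\<beta><\<sigma>. \<Sum>\<omega><d. cnj (v (i, \<beta>, \<omega>)) * w (i, \<beta>, \<omega>))" for i
  have H_shift: "H i = (\<Sum>\<beta><\<sigma>. \<Sum>\<omega><d. cnj (v (i, (\<beta> + 0) mod \<sigma>, \<omega>)) * w (i, (\<beta> + 0) mod \<sigma>, \<omega>))" for i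
    unfolding H_def by (intro sum.cong) auto
  have G_eq_H: "G i = H i" if "T1 ! i = T2 ! i" for i
    using sum_add_mod[where g = "\<lambda>\<beta>. \<Sum>\<omega><d. cnj (v (i, \<beta>, \<omega>)) * w (i, \<beta>, \<omega>)"
        and s = \<sigma> and c = "c T1 i"] that
    by (simp add: G_def H_def c_def)
  have G_H: "cmod (G i - H i)
      \<le> (if T1 ! i \<noteq> T2 ! i then l * query_mass \<sigma> d v i + query_mass \<sigma> d w i / l else 0)" for i
  proof (cases "T1 ! i = T2 ! i")
    case False
    have "cmod (G i) \<le> (l * query_mass \<sigma> d v i + query_mass \<sigma> d w i / l) / 2"
      unfolding G_def by (rule norm_query_block_le[OF assms(3)])
    moreover have "cmod (H i) \<le> (l * query_mass \<sigma> d v i + query_mass \<sigma> d w i / l) / 2"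
      unfolding H_shift by (rule norm_query_block_le[OF assms(3)])
    ultimately show ?thesis using False norm_triangle_ineq4[of "G i" "H i"] by simp
  qed (simp add: G_eq_H)
  have "inner_on (basis n \<sigma> d) (query_op \<sigma> T1 v) (query_op \<sigma> T2 w) - inner_on (basis n \<sigma> d) v w
      = (\<Sum>i<n. G i - H i)"
    unfolding inner_on_def sum_basis G_def H_def c_def query_op_def sum_subtractf[symmetric]
    using assms by (intro sum.cong refl) simp
  also have "cmod \<dots> \<le> (\<Sum>i<n. cmod (G i - H i))" by (rule norm_sum)
  also have "\<dots> \<le> (\<Sum>i<n. if T1 ! i \<noteq> T2 ! i
      then l * query_mass \<sigma> d v i + query_mass \<sigma> d w i / l else 0)"
    by (intro sum_mono G_H)
  also have "\<dots> = (\<Sum>i | i < n \<and> T1 ! i \<noteq> T2 ! i. l * query_mass \<sigma> d v i + query_mass \<sigma> d w i / l)"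
    by (simp add: sum.inter_filter[symmetric] lessThan_def conj_commute)
  finally show ?thesis .
qed

lemma sqnorm_on_query_op:
  assumes "length T = n"
  shows "sqnorm_on (basis n \<sigma> d) (query_op \<sigma> T v) = sqnorm_on (basis n \<sigma> d) v"
  using inner_on_query_op_diff[OF assms assms, of 1 \<sigma> d v v] by (simp add: inner_on_self)

lemma sqnorm_on_init_state:
  assumes "0 < n" "0 < \<sigma>" "0 < d"
  shows "sqnorm_on (basis n \<sigma> d) init_state = 1"
proof -
  have "sqnorm_on (basis n \<sigma> d) init_state = (\<Sum>x\<in>basis n \<sigma> d. if x = (0, 0, 0) then 1 else 0)"
    unfolding sqnorm_on_def init_state_def by (intro sum.cong refl) simp
  also have "\<dots> = 1"
    using assms by (simp add: finite_basis) (simp add: basis_def)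
  finally show ?thesis .
qed

lemma sqnorm_on_run_state:
  assumes "valid_qalg n \<sigma> A" "length T = n" "0 < n" "0 < \<sigma>" "k \<le> nqueries A"
  shows "sqnorm_on (basis n \<sigma> (wdim A)) (run_state n \<sigma> A T k) = 1"
  using assms(5)
proof (induction k)
  case 0
  then show ?case
    using assms sqnorm_on_apply_op[OF finite_basis] sqnorm_on_init_state
    unfolding valid_qalg_def by auto
next
  case (Suc k)
  then have "is_unitary (basis n \<sigma> (wdim A)) (unitaries A (Suc k))"
    using assms(1) unfolding valid_qalg_def by auto
  with Suc show ?case
    by (simp add: sqnorm_on_apply_op[OF finite_basis] sqnorm_on_query_op[OF assms(2)])
qed

definition query_weight :: "nat \<Rightarrow> nat \<Rightarrow> 'o qalg \<Rightarrow> nat list \<Rightarrow> nat \<Rightarrow> nat \<Rightarrow> real" where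
  "query_weight n \<sigma> A T k i = query_mass \<sigma> (wdim A) (run_state n \<sigma> A T k) i"

lemma query_weight_nonneg: "0 \<le> query_weight n \<sigma> A T k i"
  unfolding query_weight_def by (rule query_mass_nonneg)

lemma sum_query_weight:
  assumes "valid_qalg n \<sigma> A" "length T = n" "0 < n" "0 < \<sigma>" "k \<le> nqueries A"
  shows "(\<Sum>i<n. query_weight n \<sigma> A T k i) = 1"
  using sqnorm_on_run_state[OF assms] by (simp add: query_weight_def sqnorm_on_basis)

section \<open>The adversary method\<close>

lemma norm_inner_on_le_if_disjoint_supports:
  assumes "finite B" "sqnorm_on B p \<le> 1" "sqnorm_on B q \<le> 1"
    and "2/3 \<le> (\<Sum>x\<in>B \<inter> P. (cmod (p x))\<^sup>2)" "2/3 \<le> (\<Sum>x\<in>B \<inter> Q. (cmod (q x))\<^sup>2)" "P \<inter> Q = {}"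
  shows "cmod (inner_on B p q) \<le> 17/18"
proof -
  define a1 where "a1 = (\<Sum>x\<in>B \<inter> P. (cmod (p x))\<^sup>2)"
  define a2 where "a2 = (\<Sum>x\<in>B - P. (cmod (p x))\<^sup>2)"
  define b1 where "b1 = (\<Sum>x\<in>B \<inter> P. (cmod (q x))\<^sup>2)"
  define b2 where "b2 = (\<Sum>x\<in>B - P. (cmod (q x))\<^sup>2)"
  have "a1 + a2 \<le> 1" "b1 + b2 \<le> 1"
    using assms(2,3) sum.Int_Diff[OF assms(1), of "\<lambda>x. (cmod (p x))\<^sup>2" P]
      sum.Int_Diff[OF assms(1), of "\<lambda>x. (cmod (q x))\<^sup>2" P]
    unfolding a1_def a2_def b1_def b2_def sqnorm_on_def by auto
  moreover have "2/3 \<le> a1" using assms(4) unfolding a1_def .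
  moreover have "(\<Sum>x\<in>B \<inter> Q. (cmod (q x))\<^sup>2) \<le> b2"
    unfolding b2_def by (rule sum_mono2) (use assms(1,6) in auto)
  then have "2/3 \<le> b2" using assms(5) by simp
  \<comment> \<open>Weight 3/4 on \<open>P\<close> and 4/3 off \<open>P\<close>: the resulting bound is largest, namely 17/18,
    at \<open>a1 = b2 = 2/3\<close>.\<close>
  moreover have
    "cmod (inner_on B p q) \<le> ((3/4) * a1 + b1 / (3/4)) / 2 + ((4/3) * a2 + b2 / (4/3)) / 2"
  proof -
    have "cmod (inner_on B p q)
        \<le> cmod (\<Sum>x\<in>B \<inter> P. cnj (p x) * q x) + cmod (\<Sum>x\<in>B - P. cnj (p x) * q x)"
      unfolding inner_on_def sum.Int_Diff[OF assms(1), of _ P] by (rule norm_triangle_ineq)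
    also have "\<dots> \<le> ((3/4) * a1 + b1 / (3/4)) / 2 + ((4/3) * a2 + b2 / (4/3)) / 2"
      unfolding a1_def a2_def b1_def b2_def by (intro add_mono norm_sum_cnj_mult_le) simp_all
    finally show ?thesis .
  qed
  ultimately show ?thesis by (simp add: field_simps)
qed

lemma hybrid_bound:
  assumes val: "valid_qalg n \<sigma> A" and pos: "0 < n" "0 < \<sigma>" and len: "length x = n" "length y = n"
    and "2/3 \<le> prob_output n \<sigma> A x a" "2/3 \<le> prob_output n \<sigma> A y b" "a \<noteq> b" and "0 < l"
  shows "1/18 \<le> (\<Sum>k<nqueries A. \<Sum>i | i < n \<and> x ! i \<noteq> y ! i.
    l * query_weight n \<sigma> A x k i + query_weight n \<sigma> A y k i / l)"
proof -
  let ?B = "basis n \<sigma> (wdim A)"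
  define s where "s k = cmod (inner_on ?B (run_state n \<sigma> A x k) (run_state n \<sigma> A y k))" for k
  define D where "D k = (\<Sum>i | i < n \<and> x ! i \<noteq> y ! i.
    l * query_weight n \<sigma> A x k i + query_weight n \<sigma> A y k i / l)" for k
  have step: "s k - D k \<le> s (Suc k)" if "Suc k \<le> nqueries A" for k
  proof -
    define P where "P = inner_on ?B (run_state n \<sigma> A x k) (run_state n \<sigma> A y k)"
    define Q where
      "Q = inner_on ?B (query_op \<sigma> x (run_state n \<sigma> A x k)) (query_op \<sigma> y (run_state n \<sigma> A y k))"
    have "is_unitary ?B (unitaries A (Suc k))" using val that unfolding valid_qalg_def by auto
    then have "s (Suc k) = cmod Q"
      unfolding s_def Q_def by (simp add: inner_on_apply_op[OF finite_basis])
    moreover have "cmod (Q - P) \<le> D k"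
      unfolding P_def Q_def D_def query_weight_def by (rule inner_on_query_op_diff[OF len \<open>0 < l\<close>])
    ultimately show ?thesis
      using norm_triangle_ineq2[of P Q] norm_minus_commute[of P Q] unfolding s_def P_def by linarith
  qed
  have decay: "s 0 - (\<Sum>k<m. D k) \<le> s m" if "m \<le> nqueries A" for m
    using that
  proof (induction m)
    case (Suc m)
    then show ?case using step[of m] by simp
  qed simp
  have "s 0 = 1"
    using sqnorm_on_run_state[OF val len(1) pos, of 0] by (simp add: s_def inner_on_self)
  moreover have "s (nqueries A) \<le> 17/18"
    unfolding s_def
  proof (rule norm_inner_on_le_if_disjoint_supports[OF finite_basis])
    show "sqnorm_on ?B (run_state n \<sigma> A x (nqueries A)) \<le> 1"
      "sqnorm_on ?B (run_state n \<sigma> A y (nqueries A)) \<le> 1"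
      using sqnorm_on_run_state[OF val _ pos] len by simp_all
    show "2/3 \<le> (\<Sum>z\<in>?B \<inter> {z. outp A z = a}. (cmod (run_state n \<sigma> A x (nqueries A) z))\<^sup>2)"
      "2/3 \<le> (\<Sum>z\<in>?B \<inter> {z. outp A z = b}. (cmod (run_state n \<sigma> A y (nqueries A) z))\<^sup>2)"
      using assms(6,7) unfolding prob_output_def final_state_def by simp_all
    show "{z. outp A z = a} \<inter> {z. outp A z = b} = {}" using \<open>a \<noteq> b\<close> by auto
  qed
  ultimately show ?thesis using decay[of "nqueries A"] unfolding D_def by simp
qed

lemma sum_relation_le_count:
  fixes g :: "'a \<Rightarrow> 'i \<Rightarrow> real"
  assumes "finite R" "finite I" "\<And>x i. 0 \<le> g x i"
    and "\<And>x i. i \<in> I \<Longrightarrow> card {y. (x, y) \<in> R \<and> P x y i} \<le> c"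
  shows "(\<Sum>(x, y)\<in>R. \<Sum>i | i \<in> I \<and> P x y i. g x i) \<le> c * (\<Sum>x\<in>Domain R. \<Sum>i\<in>I. g x i)"
proof -
  have R: "R = Sigma (Domain R) (\<lambda>x. R `` {x})" by auto
  have "(\<Sum>(x, y)\<in>R. \<Sum>i | i \<in> I \<and> P x y i. g x i)
      = (\<Sum>x\<in>Domain R. \<Sum>y\<in>R `` {x}. \<Sum>i\<in>I. if P x y i then g x i else 0)"
    using assms(1,2)
    by (subst R, subst sum.Sigma[symmetric]) (auto simp: sum.inter_filter finite_Domain)
  also have "\<dots> = (\<Sum>x\<in>Domain R. \<Sum>i\<in>I. g x i * card {y. (x, y) \<in> R \<and> P x y i})"
  proof (intro sum.cong refl)
    fix x assume "x \<in> Domain R"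
    have "(\<Sum>y\<in>R `` {x}. \<Sum>i\<in>I. if P x y i then g x i else 0)
        = (\<Sum>i\<in>I. \<Sum>y\<in>R `` {x}. if P x y i then g x i else 0)"
      by (rule sum.swap)
    also have "\<dots> = (\<Sum>i\<in>I. g x i * card {y. (x, y) \<in> R \<and> P x y i})"
    proof (intro sum.cong refl)
      fix i
      have "{y \<in> R `` {x}. P x y i} = {y. (x, y) \<in> R \<and> P x y i}" by auto
      then show "(\<Sum>y\<in>R `` {x}. if P x y i then g x i else 0)
          = g x i * card {y. (x, y) \<in> R \<and> P x y i}"
        using sum.inter_filter[of "R `` {x}" "\<lambda>_. g x i" "\<lambda>y. P x y i"] assms(1)
        by (simp add: mult.commute)
    qed
    finally show "(\<Sum>y\<in>R `` {x}. \<Sum>i\<in>I. if P x y i then g x i else 0)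
        = (\<Sum>i\<in>I. g x i * card {y. (x, y) \<in> R \<and> P x y i})" .
  qed
  also have "\<dots> \<le> (\<Sum>x\<in>Domain R. \<Sum>i\<in>I. g x i * c)"
    using assms(3,4) by (intro sum_mono mult_left_mono) auto
  finally show ?thesis by (simp add: sum_distrib_left sum_distrib_right mult.commute)
qed

lemma sum_differing_weights_Domain_le:
  fixes w :: "nat list \<Rightarrow> nat \<Rightarrow> real"
  assumes "finite R" "\<And>x i. 0 \<le> w x i" "\<And>x. x \<in> Domain R \<Longrightarrow> (\<Sum>i<n. w x i) = 1"
    and "\<And>x i. i < n \<Longrightarrow> card {y. (x, y) \<in> R \<and> x ! i \<noteq> y ! i} \<le> a"
  shows "(\<Sum>(x, y)\<in>R. \<Sum>i | i < n \<and> x ! i \<noteq> y ! i. w x i) \<le> a * card (Domain R)"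
proof -
  have "(\<Sum>(x, y)\<in>R. \<Sum>i | i < n \<and> x ! i \<noteq> y ! i. w x i) \<le> a * (\<Sum>x\<in>Domain R. \<Sum>i<n. w x i)"
    using sum_relation_le_count[where P = "\<lambda>x y i. x ! i \<noteq> y ! i",
        OF assms(1) finite_lessThan assms(2)]
      assms(4) by simp
  also have "\<dots> = a * card (Domain R)" using assms(3) by simp
  finally show ?thesis .
qed

lemma sum_differing_weights_Range_le:
  fixes w :: "nat list \<Rightarrow> nat \<Rightarrow> real"
  assumes "finite R" "\<And>y i. 0 \<le> w y i" "\<And>y. y \<in> Range R \<Longrightarrow> (\<Sum>i<n. w y i) = 1"
    and "\<And>y i. i < n \<Longrightarrow> card {x. (x, y) \<in> R \<and> x ! i \<noteq> y ! i} \<le> b"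
  shows "(\<Sum>(x, y)\<in>R. \<Sum>i | i < n \<and> x ! i \<noteq> y ! i. w y i) \<le> b * card (Range R)"
proof -
  have "(\<Sum>(x, y)\<in>R. \<Sum>i | i < n \<and> x ! i \<noteq> y ! i. w y i)
      = (\<Sum>(y, x)\<in>R\<inverse>. \<Sum>i | i < n \<and> y ! i \<noteq> x ! i. w y i)"
    by (rule sum.reindex_bij_witness[where i = prod.swap and j = prod.swap]) (auto simp: eq_commute)
  also have "\<dots> \<le> b * card (Domain (R\<inverse>))"
  proof (rule sum_differing_weights_Domain_le)
    show "card {x. (y, x) \<in> R\<inverse> \<and> y ! i \<noteq> x ! i} \<le> b" if "i < n" for y i
    proof -
      have "{x. (y, x) \<in> R\<inverse> \<and> y ! i \<noteq> x ! i} = {x. (x, y) \<in> R \<and> x ! i \<noteq> y ! i}" by auto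
      then show ?thesis using assms(4)[OF that, of y] by simp
    qed
  qed (use assms(1-3) in auto)
  finally show ?thesis by simp
qed

theorem adversary_lower_bound:
  fixes f :: "nat list \<Rightarrow> 'o" and a b :: nat
  assumes comp: "computes n \<sigma> A f S" and S: "S \<subseteq> texts \<sigma> n" and pos: "0 < n" "0 < \<sigma>"
    and R: "finite R" "R \<subseteq> S \<times> S" "\<And>x y. (x, y) \<in> R \<Longrightarrow> f x \<noteq> f y"
    and deg_x: "\<And>x i. i < n \<Longrightarrow> card {y. (x, y) \<in> R \<and> x ! i \<noteq> y ! i} \<le> a"
    and deg_y: "\<And>y i. i < n \<Longrightarrow> card {x. (x, y) \<in> R \<and> x ! i \<noteq> y ! i} \<le> b"
    and "0 < l"
  shows "real (card R)
    \<le> 18 * real (nqueries A) * (l * real (a * card (Domain R)) + real (b * card (Range R)) / l)"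
proof -
  define t where "t = nqueries A"
  define w where "w = query_weight n \<sigma> A"
  have val: "valid_qalg n \<sigma> A" and correct: "\<And>T. T \<in> S \<Longrightarrow> 2/3 \<le> prob_output n \<sigma> A T (f T)"
    using comp unfolding computes_def by auto
  have len: "length x = n" if "x \<in> S" for x using S that unfolding texts_def by auto
  have total: "(\<Sum>i<n. w x k i) = 1" if "x \<in> S" "k < t" for x k
    using sum_query_weight[OF val len[OF that(1)] pos] that unfolding t_def w_def by simp
  have w_nonneg: "0 \<le> w x k i" for x k i unfolding w_def by (rule query_weight_nonneg)
  have X: "(\<Sum>(x, y)\<in>R. \<Sum>i | i < n \<and> x ! i \<noteq> y ! i. w x k i) \<le> a * card (Domain R)"
    if "k < t" for k
    by (rule sum_differing_weights_Domain_le[OF R(1) _ _ deg_x])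
      (use w_nonneg total[OF _ that] R(2) in auto)
  have Y: "(\<Sum>(x, y)\<in>R. \<Sum>i | i < n \<and> x ! i \<noteq> y ! i. w y k i) \<le> b * card (Range R)"
    if "k < t" for k
    by (rule sum_differing_weights_Range_le[OF R(1) _ _ deg_y])
      (use w_nonneg total[OF _ that] R(2) in auto)
  have pair: "1/18 \<le> (\<Sum>k<t. \<Sum>i | i < n \<and> x ! i \<noteq> y ! i. l * w x k i + w y k i / l)"
    if "(x, y) \<in> R" for x y
  proof -
    have x: "x \<in> S" and y: "y \<in> S" using R(2) that by auto
    show ?thesis
      using hybrid_bound[where x = x and y = y and a = "f x" and b = "f y" and l = l]
        val pos len[OF x] len[OF y] correct[OF x] correct[OF y] R(3)[OF that] \<open>0 < l\<close>
      unfolding t_def w_def by simp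
  qed
  have "real (card R) / 18 = (\<Sum>(x, y)\<in>R. 1/18)" by simp
  also have "\<dots> \<le> (\<Sum>(x, y)\<in>R. \<Sum>k<t. \<Sum>i | i < n \<and> x ! i \<noteq> y ! i. l * w x k i + w y k i / l)"
    using pair by (intro sum_mono) auto
  also have "\<dots> = (\<Sum>k<t. l * (\<Sum>(x, y)\<in>R. \<Sum>i | i < n \<and> x ! i \<noteq> y ! i. w x k i)
      + (\<Sum>(x, y)\<in>R. \<Sum>i | i < n \<and> x ! i \<noteq> y ! i. w y k i) / l)"
    unfolding split_def
    by (subst sum.swap) (simp add: sum.distrib sum_distrib_left sum_divide_distrib)
  also have "\<dots> \<le> (\<Sum>k<t. l * (a * card (Domain R)) + b * card (Range R) / l)"
    using X Y \<open>0 < l\<close> by (intro sum_mono add_mono mult_left_mono divide_right_mono) auto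
  finally show ?thesis unfolding t_def by (simp add: field_simps)
qed

section \<open>Runs and the Burrows-Wheeler transform\<close>

lemma map_fst_rle: "map fst (rle xs) = remdups_adj xs"
proof (induction xs)
  case (Cons x xs)
  show ?case by (cases "rle xs") (auto simp: remdups_adj_Cons Cons.IH[symmetric] split: prod.splits)
qed simp

lemma length_rle: "length (rle xs) = length (remdups_adj xs)"
  by (metis length_map map_fst_rle)

lemma concat_rle: "concat (map (\<lambda>(a, k). replicate k a) (rle xs)) = xs"
proof (induction xs)
  case (Cons x xs)
  then show ?case by (cases "rle xs") (auto split: prod.splits)
qed simp

lemma rle_inj: "rle xs = rle ys \<Longrightarrow> xs = ys"
  by (metis concat_rle)

lemma card_set_le_length_remdups_adj: "card (set xs) \<le> length (remdups_adj xs)"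
  by (metis card_length remdups_adj_set)

lemma length_remdups_adj_le_count:
  "length (remdups_adj xs) \<le> 2 * length (filter (\<lambda>x. x \<noteq> a) xs) + 1"
proof -
  have "length (remdups_adj xs)
      \<le> 2 * length (filter (\<lambda>x. x \<noteq> a) xs) + (if xs \<noteq> [] \<and> hd xs = a then 1 else 0)"
  proof (induction xs rule: remdups_adj.induct)
    case (3 x y xs)
    then show ?case by (cases "x = y"; cases "x = a"; cases "y = a") auto
  qed simp_all
  then show ?thesis by (simp split: if_splits)
qed

lemma mset_bwt: "mset (bwt T) = mset T"
proof (cases "T = []")
  case False
  define g :: "nat list \<Rightarrow> nat" where "g s = (let p = length T - length s in
    if p = 0 then T ! (length T - 1) else T ! (p - 1))" for s
  have "mset (bwt T) = mset (map (g \<circ> (\<lambda>i. drop i T)) [0..<length T])"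
    unfolding bwt_def g_def Let_def by (simp add: image_mset.compositionality)
  \<comment> \<open>Listed by suffixes in text order instead of sorted order, the BWT is a rotation of \<open>T\<close>.\<close>
  also have "map (g \<circ> (\<lambda>i. drop i T)) [0..<length T] = last T # butlast T"
    using False by (intro nth_equalityI) (auto simp: g_def nth_Cons' last_conv_nth nth_butlast)
  also have "mset (last T # butlast T) = mset (butlast T @ [last T])" by simp
  finally show ?thesis using False by simp
qed (simp add: bwt_def)

lemma card_set_le_bwt_r: "card (set T) \<le> bwt_r T"
proof -
  have "set (bwt T) = set T" by (metis mset_bwt set_mset_mset)
  then show ?thesis
    using card_set_le_length_remdups_adj[of "bwt T"] by (simp add: bwt_r_def rlbwt_def length_rle)
qed

lemma bwt_r_le_count: "bwt_r T \<le> 2 * length (filter (\<lambda>x. x \<noteq> a) T) + 1"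
proof -
  have "length (filter (\<lambda>x. x \<noteq> a) (bwt T)) = length (filter (\<lambda>x. x \<noteq> a) T)"
    by (metis mset_bwt mset_filter size_mset)
  then show ?thesis
    using length_remdups_adj_le_count[of "bwt T" a] by (simp add: bwt_r_def rlbwt_def length_rle)
qed

lemma rlbwt_eq_imp_mset_eq: "rlbwt T = rlbwt T' \<Longrightarrow> mset T = mset T'"
  by (metis rlbwt_def rle_inj mset_bwt)

section \<open>LZ77 factorization\<close>

definition lz_next :: "nat list \<Rightarrow> nat \<Rightarrow> nat" where
  "lz_next T i = i + max 1 (lz_len T i)"

lemma less_lz_next: "i < lz_next T i"
  unfolding lz_next_def by simp

lemma lz_aux_beyond: "length T \<le> i \<Longrightarrow> lz_aux k T i = []"
  by (cases k) auto

lemma lz_aux_Suc: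
  "i < length T \<Longrightarrow>
    lz_aux (Suc k) T i = take (max 1 (lz_len T i)) (drop i T) # lz_aux k T (lz_next T i)"
  by (simp add: lz_next_def Let_def)

declare lz_aux.simps(2)[simp del]

lemma lz_len_ge:
  assumes "i' < i" "1 \<le> l" "i + l \<le> length T" "take l (drop i' T) = take l (drop i T)"
  shows "l \<le> lz_len T i"
proof -
  have "take l (drop i' T) ! 0 = take l (drop i T) ! 0" using assms(4) by simp
  then have "T ! i' = T ! i" using assms(1-3) by simp
  then have "T ! i \<in> set (take i T)"
    using assms(1,3) by (auto simp: in_set_conv_nth intro!: exI[of _ i'])
  then show ?thesis
    unfolding lz_len_def using assms by (auto intro!: Greatest_le_nat[where b = "length T"])
qed

lemma lz_len_copy:
  assumes "i < length T" "T ! i \<in> set (take i T)"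
  obtains i' where "i' < i" "1 \<le> lz_len T i" "i + lz_len T i \<le> length T"
    "take (lz_len T i) (drop i' T) = take (lz_len T i) (drop i T)"
proof -
  define P where "P l \<longleftrightarrow> 1 \<le> l \<and> i + l \<le> length T \<and>
    (\<exists>i' < i. i' + l \<le> length T \<and> take l (drop i' T) = take l (drop i T))" for l
  obtain i' where "i' < i" "T ! i' = T ! i" using assms(2) by (auto simp: in_set_conv_nth)
  then have "P 1" unfolding P_def using assms(1) by (auto simp: take_Suc_conv_app_nth)
  then have "P (Greatest P)" by (rule GreatestI_nat[where b = "length T"]) (auto simp: P_def)
  moreover have "lz_len T i = Greatest P" unfolding lz_len_def P_def using assms(2) by simp
  ultimately show ?thesis using that unfolding P_def by auto
qed

lemma lz_next_le_lz_next_Suc: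
  assumes "Suc i < length T"
  shows "lz_next T i \<le> lz_next T (Suc i)"
proof (cases "T ! i \<in> set (take i T) \<and> 2 \<le> lz_len T i")
  case False
  then have "max 1 (lz_len T i) = 1" unfolding lz_len_def by auto
  then show ?thesis using less_lz_next[of "Suc i" T] unfolding lz_next_def by simp
next
  case True
  then obtain i' where i': "i' < i" "i + lz_len T i \<le> length T"
    "take (lz_len T i) (drop i' T) = take (lz_len T i) (drop i T)"
    using lz_len_copy[of i T] assms by auto
  from arg_cong[OF i'(3), of "drop 1"]
  have "take (lz_len T i - 1) (drop (Suc i') T) = take (lz_len T i - 1) (drop (Suc i) T)"
    by (simp add: drop_take)
  then have "lz_len T i - 1 \<le> lz_len T (Suc i)"
    by (rule lz_len_ge[rotated 3]) (use True i' in auto)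
  then show ?thesis using True unfolding lz_next_def by auto
qed

lemma lz_next_mono: "i \<le> i' \<Longrightarrow> i' < length T \<Longrightarrow> lz_next T i \<le> lz_next T i'"
proof (induction i' rule: dec_induct)
  case (step m)
  then show ?case using lz_next_le_lz_next_Suc[of m T] by simp
qed simp

lemma length_lz_aux_antimono: "i \<le> i' \<Longrightarrow> length (lz_aux k T i') \<le> length (lz_aux k T i)"
proof (induction k arbitrary: i i')
  case (Suc k)
  show ?case
  proof (cases "length T \<le> i'")
    case False
    with Suc.prems have "lz_next T i \<le> lz_next T i'" by (simp add: lz_next_mono)
    with False Suc show ?thesis by (simp add: lz_aux_Suc)
  qed (simp add: lz_aux_beyond)
qed simp

lemma length_lz_aux_Suc_le:
  "q \<le> lz_next T i \<Longrightarrow> length (lz_aux (Suc k) T i) \<le> Suc (length (lz_aux k T q))"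
  by (cases "length T \<le> i") (simp_all add: lz_aux_beyond lz_aux_Suc length_lz_aux_antimono)

lemma concat_lz_aux: "length T \<le> i + k \<Longrightarrow> concat (lz_aux k T i) = drop i T"
proof (induction k arbitrary: i)
  case (Suc k)
  show ?case
  proof (cases "length T \<le> i")
    case False
    then have "concat (lz_aux (Suc k) T i)
        = take (max 1 (lz_len T i)) (drop i T) @ drop (lz_next T i) T"
      using Suc less_lz_next[of i T] by (simp add: lz_aux_Suc)
    then show ?thesis unfolding lz_next_def by (metis append_take_drop_id drop_drop add.commute)
  qed (simp add: lz_aux_beyond)
qed simp

lemma concat_lz77: "concat (lz77 T) = T"
  unfolding lz77_def by (simp add: concat_lz_aux)

lemma lz77_inj: "lz77 T = lz77 T' \<Longrightarrow> T = T'"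
  by (metis concat_lz77)

lemma lz77_eq_imp_mset_eq: "lz77 T = lz77 T' \<Longrightarrow> mset T = mset T'"
  by (drule lz77_inj) simp

lemma set_take_lz_next:
  assumes "i < length T"
  shows "set (take (lz_next T i) T) \<subseteq> insert (T ! i) (set (take i T))"
proof (cases "T ! i \<in> set (take i T)")
  case False
  then have "lz_next T i = Suc i" unfolding lz_next_def lz_len_def by simp
  then show ?thesis using assms by (simp add: take_Suc_conv_app_nth)
next
  case True
  then obtain i' where i': "i' < i" "i + lz_len T i \<le> length T"
    "take (lz_len T i) (drop i' T) = take (lz_len T i) (drop i T)"
    using lz_len_copy[OF assms] by blast
  have "set (take (i + m) T) = set (take i T)" if "m \<le> lz_len T i" for m
    using that
  proof (induction m)
    case (Suc m)
    have "T ! (i + m) = take (lz_len T i) (drop i T) ! m" using Suc.prems i'(2) by simp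
    also have "\<dots> = T ! (i' + m)" unfolding i'(3)[symmetric] using Suc.prems i'(1,2) by simp
    also have "\<dots> \<in> set (take (i + m) T)"
      using Suc.prems i'(1,2) by (auto simp: in_set_conv_nth intro!: exI[of _ "i' + m"])
    finally show ?case using Suc i'(2) by (simp add: take_Suc_conv_app_nth insert_absorb)
  qed simp
  moreover have "1 \<le> lz_len T i" using lz_len_copy[OF assms True] by blast
  ultimately show ?thesis unfolding lz_next_def by (simp add: subset_insertI)
qed

lemma card_set_le_lz_aux:
  "length T \<le> i + k \<Longrightarrow> card (set T) \<le> card (set (take i T)) + length (lz_aux k T i)"
proof (induction k arbitrary: i)
  case (Suc k)
  show ?case
  proof (cases "length T \<le> i")
    case False
    have "card (set (take (lz_next T i) T)) \<le> card (insert (T ! i) (set (take i T)))"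
      using False by (intro card_mono set_take_lz_next) simp_all
    also have "\<dots> \<le> Suc (card (set (take i T)))" by (simp add: card_insert_if)
    finally have "card (set (take (lz_next T i) T)) \<le> Suc (card (set (take i T)))" .
    then show ?thesis
      using Suc.IH[of "lz_next T i"] Suc.prems False less_lz_next[of i T] by (simp add: lz_aux_Suc)
  qed simp
qed simp

lemma card_set_le_lz_z: "card (set T) \<le> lz_z T"
  using card_set_le_lz_aux[of T 0 "length T"] unfolding lz_z_def lz77_def by simp

lemma lz_next_ge_first_run:
  assumes "i < length T"
  shows "Suc i + length (takeWhile (\<lambda>y. y = T ! i) (drop (Suc i) T)) \<le> lz_next T (Suc i)"
proof -
  define m where "m = length (takeWhile (\<lambda>y. y = T ! i) (drop (Suc i) T))"
  have bound: "Suc i + m \<le> length T"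
    using length_takeWhile_le[of "\<lambda>y. y = T ! i" "drop (Suc i) T"] assms unfolding m_def by simp
  have run: "take m (drop (Suc i) T) = replicate m (T ! i)"
    unfolding m_def takeWhile_eq_take[symmetric]
    by (metis (mono_tags) replicate_length_same set_takeWhileD)
  show ?thesis
  proof (cases m)
    case (Suc m')
    have "take m' (drop (Suc i) T) = replicate m' (T ! i)"
      using arg_cong[OF run, of "take m'"] Suc by (simp del: replicate.simps(2))
    then have "take m (drop i T) = take m (drop (Suc i) T)"
      using assms Suc run by (simp add: Cons_nth_drop_Suc[symmetric])
    then have "m \<le> lz_len T (Suc i)"
      by (rule lz_len_ge[rotated 3]) (use Suc bound in auto)
    then show ?thesis unfolding m_def[symmetric] lz_next_def by simp
  qed (use less_lz_next[of "Suc i" T] in \<open>simp add: m_def[symmetric]\<close>)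
qed

text \<open>The factors starting at \<open>i\<close> and \<open>i + 1\<close> together reach the end of the run containing
  position \<open>i\<close>, so every run starts at most two factors.\<close>

lemma length_lz_aux_le_runs: "length (lz_aux k T i) \<le> 2 * length (remdups_adj (drop i T))"
proof (induction k arbitrary: i rule: less_induct)
  case (less k)
  show ?case
  proof (cases "i < length T")
    case True
    define e where "e = Suc i + length (takeWhile (\<lambda>y. y = T ! i) (drop (Suc i) T))"
    have runs: "length (remdups_adj (drop i T)) = Suc (length (remdups_adj (drop e T)))"
      using True unfolding e_def
      by (simp add: Cons_nth_drop_Suc[symmetric] remdups_adj_Cons' dropWhile_eq_drop add.commute)
    consider "k \<le> 1" | k' where "k = Suc (Suc k')" by (cases k; cases "k - 1") auto
    then show ?thesis
    proof cases
      case 1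
      then show ?thesis using runs True by (cases k) (auto simp: lz_aux_Suc)
    next
      case 2
      have "length (lz_aux k T i) \<le> Suc (length (lz_aux (Suc k') T (Suc i)))"
        unfolding 2 by (rule length_lz_aux_Suc_le[OF Suc_leI[OF less_lz_next]])
      also have "\<dots> \<le> Suc (Suc (length (lz_aux k' T e)))"
        using length_lz_aux_Suc_le[OF lz_next_ge_first_run[OF True]] unfolding e_def by simp
      also have "\<dots> \<le> 2 * length (remdups_adj (drop i T))"
        using less.IH[of k' e] 2 runs by simp
      finally show ?thesis .
    qed
  qed (simp add: lz_aux_beyond)
qed

lemma lz_z_le_runs: "lz_z T \<le> 2 * length (remdups_adj T)"
  using length_lz_aux_le_runs[of "length T" T 0] unfolding lz_z_def lz77_def by simp

lemma lz_z_le_count: "lz_z T \<le> 4 * length (filter (\<lambda>x. x \<noteq> a) T) + 2"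
  using lz_z_le_runs[of T] length_remdups_adj_le_count[of T a] by linarith

section \<open>Hard texts\<close>

lemma finite_texts: "finite (texts \<sigma> n)"
  unfolding texts_def
  by (rule finite_subset[OF _ finite_lists_length_eq[OF finite_atLeastLessThan, of 0 \<sigma> n]]) auto

lemma mset_list_update_neq:
  assumes "i < length xs" "v \<noteq> xs ! i"
  shows "mset (xs[i := v]) \<noteq> mset xs"
proof -
  have "count (mset (xs[i := v])) v = Suc (count (mset xs) v)"
    using assms by (simp add: mset_update)
  then show ?thesis by auto
qed

definition indicator_text :: "nat \<Rightarrow> nat \<Rightarrow> nat list" where
  "indicator_text n j = map (\<lambda>p. if p = j then 1 else 0) [0..<n]"

lemma length_indicator_text [simp]: "length (indicator_text n j) = n"
  by (simp add: indicator_text_def)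

lemma nth_indicator_text [simp]: "p < n \<Longrightarrow> indicator_text n j ! p = (if p = j then 1 else 0)"
  by (simp add: indicator_text_def)

lemma indicator_text_in_texts: "2 \<le> \<sigma> \<Longrightarrow> indicator_text n j \<in> texts \<sigma> n"
  by (auto simp: texts_def indicator_text_def)

lemma count_nonzero_indicator_text: "length (filter (\<lambda>x. x \<noteq> 0) (indicator_text n j)) \<le> 1"
proof -
  have "length (filter (\<lambda>x. x \<noteq> 0) (indicator_text n j))
      = card {p. p < n \<and> indicator_text n j ! p \<noteq> 0}"
    by (simp only: length_filter_conv_card length_indicator_text)
  also have "\<dots> \<le> card {j}" by (rule card_mono) (auto split: if_splits)
  finally show ?thesis by simp
qed

lemma indicator_text_inj: "j < n \<Longrightarrow> indicator_text n j = indicator_text n j' \<Longrightarrow> j = j'"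
  by (metis nth_indicator_text one_neq_zero)

lemma mset_indicator_text_neq:
  assumes "j < n"
  shows "mset (indicator_text n j) \<noteq> mset (replicate n 0)"
proof
  assume "mset (indicator_text n j) = mset (replicate n 0)"
  then have "set (indicator_text n j) = set (replicate n 0)" by (metis set_mset_mset)
  moreover have "indicator_text n j ! j \<in> set (indicator_text n j)"
    using nth_mem[of j "indicator_text n j"] assms by simp
  ultimately show False using assms by simp
qed

lemma indicator_query_lower_bound:
  fixes f :: "nat list \<Rightarrow> 'o"
  assumes comp: "computes n \<sigma> A f S" and S: "S \<subseteq> texts \<sigma> n" "replicate n 0 \<in> S"
    "\<And>j. j < n \<Longrightarrow> indicator_text n j \<in> S"
    and f: "\<And>j. j < n \<Longrightarrow> f (indicator_text n j) \<noteq> f (replicate n 0)" and pos: "0 < n" "0 < \<sigma>"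
  shows "sqrt (real n) \<le> 36 * real (nqueries A)"
proof -
  define R :: "(nat list \<times> nat list) set"
    where "R = (\<lambda>j. (replicate n 0, indicator_text n j)) ` {..<n}"
  have "inj_on (\<lambda>j. (replicate n 0, indicator_text n j)) {..<n}"
    by (rule inj_onI) (use indicator_text_inj in blast)
  then have card_R: "card R = n" unfolding R_def by (subst card_image) auto
  have "Domain R = {replicate n 0}" using pos unfolding R_def by auto
  have "card (Range R) \<le> n"
    unfolding R_def by (metis card_image_le card_lessThan finite_lessThan image_image Range_snd)
  have "real n = real (card R)" by (simp add: card_R)
  also have "\<dots>
      \<le> 18 * real (nqueries A)
        * (sqrt n * real (1 * card (Domain R)) + real (1 * card (Range R)) / sqrt n)"
  proof (rule adversary_lower_bound[OF comp S(1) pos])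
    show "finite R" "R \<subseteq> S \<times> S" using S unfolding R_def by auto
    show "f x \<noteq> f y" if "(x, y) \<in> R" for x y using that f unfolding R_def by fastforce
    show "card {y. (x, y) \<in> R \<and> x ! i \<noteq> y ! i} \<le> 1" if "i < n" for x i
    proof -
      have "{y. (x, y) \<in> R \<and> x ! i \<noteq> y ! i} \<subseteq> {indicator_text n i}"
        using that unfolding R_def by (auto split: if_splits)
      from card_mono[OF _ this] show ?thesis by simp
    qed
    show "card {x. (x, y) \<in> R \<and> x ! i \<noteq> y ! i} \<le> 1" for y i
    proof -
      have "{x. (x, y) \<in> R \<and> x ! i \<noteq> y ! i} \<subseteq> {replicate n 0}" unfolding R_def by auto
      from card_mono[OF _ this] show ?thesis by simp
    qed
  qed (use pos in simp)
  also have "\<dots> \<le> 18 * real (nqueries A) * (sqrt n + real n / sqrt n)"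
    using \<open>Domain R = {replicate n 0}\<close> \<open>card (Range R) \<le> n\<close>
    by (intro mult_left_mono add_mono divide_right_mono) auto
  also have "\<dots> = sqrt n * (36 * real (nqueries A))" by (simp add: real_div_sqrt)
  finally have "sqrt n * sqrt n \<le> sqrt n * (36 * real (nqueries A))" by simp
  then show ?thesis using pos by (subst (asm) mult_le_cancel_left_pos) auto
qed

definition marked_texts :: "nat \<Rightarrow> nat list set" where
  "marked_texts n = {T. length T = n \<and>
     (\<forall>p<n. even p \<longrightarrow> T ! p = p div 2 + 2) \<and> (\<forall>p<n. odd p \<longrightarrow> T ! p \<le> 1)}"

definition flip_at :: "nat \<Rightarrow> nat list \<Rightarrow> nat list" where
  "flip_at j T = T[j := 1 - T ! j]"

lemma marked_texts_subset_texts: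
  assumes "4 \<le> n" "n \<le> \<sigma>"
  shows "marked_texts n \<subseteq> texts \<sigma> n"
proof
  fix T assume T: "T \<in> marked_texts n"
  have "T ! p < \<sigma>" if "p < n" for p
  proof (cases "even p")
    case True
    then have "p div 2 + 2 < n" using that assms(1) by presburger
    then show ?thesis using T True that assms(2) by (simp add: marked_texts_def)
  next
    case False
    then show ?thesis using T that assms by (fastforce simp: marked_texts_def)
  qed
  then show "T \<in> texts \<sigma> n" using T by (auto simp: texts_def marked_texts_def in_set_conv_nth)
qed

lemma marked_texts_nonempty: "marked_texts n \<noteq> {}"
proof -
  have "map (\<lambda>p. if even p then p div 2 + 2 else 0) [0..<n] \<in> marked_texts n"
    unfolding marked_texts_def by auto
  then show ?thesis by blast
qed

lemma flip_at_in_marked_texts: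
  "T \<in> marked_texts n \<Longrightarrow> j < n \<Longrightarrow> odd j \<Longrightarrow> flip_at j T \<in> marked_texts n"
  unfolding marked_texts_def flip_at_def by (auto simp: nth_list_update)

lemma flip_at_flip_at:
  "T \<in> marked_texts n \<Longrightarrow> j < n \<Longrightarrow> odd j \<Longrightarrow> flip_at j (flip_at j T) = T"
  unfolding marked_texts_def flip_at_def by fastforce

lemma nth_flip_at_neq_iff:
  assumes "T \<in> marked_texts n" "j < n" "odd j" "i < n"
  shows "T ! i \<noteq> flip_at j T ! i \<longleftrightarrow> i = j"
proof -
  have "length T = n" "1 - T ! j \<noteq> T ! j"
    using assms(1-3) unfolding marked_texts_def by (auto, presburger)
  then show ?thesis using assms(2,4) unfolding flip_at_def by (auto simp: nth_list_update)
qed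

lemma flip_at_inj:
  assumes "T \<in> marked_texts n" "j < n" "odd j" "j' < n" "odd j'" "flip_at j T = flip_at j' T"
  shows "j = j'"
proof -
  have "T ! j \<noteq> flip_at j' T ! j"
    using nth_flip_at_neq_iff[OF assms(1-3,2)] assms(6) by simp
  then show ?thesis using nth_flip_at_neq_iff[OF assms(1,4,5,2)] by simp
qed

lemma mset_flip_at_neq:
  assumes "T \<in> marked_texts n" "j < n" "odd j"
  shows "mset (flip_at j T) \<noteq> mset T"
proof -
  have "length T = n" "1 - T ! j \<noteq> T ! j"
    using assms unfolding marked_texts_def by (auto, presburger)
  then show ?thesis unfolding flip_at_def using assms(2) by (intro mset_list_update_neq) auto
qed

lemma card_set_marked_text: "T \<in> marked_texts n \<Longrightarrow> n \<le> 2 * card (set T)"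
proof -
  assume T: "T \<in> marked_texts n"
  have "(\<lambda>q. q + 2) ` {..<(n + 1) div 2} \<subseteq> set T"
  proof
    fix x assume "x \<in> (\<lambda>q. q + 2) ` {..<(n + 1) div 2}"
    then obtain q where q: "q < (n + 1) div 2" "x = q + 2" by auto
    then have "2 * q < n" by presburger
    with T q show "x \<in> set T" unfolding marked_texts_def by (force simp: in_set_conv_nth)
  qed
  from card_mono[OF _ this] have "(n + 1) div 2 \<le> card (set T)" by (simp add: card_image inj_on_def)
  then show ?thesis by presburger
qed

lemma marked_query_lower_bound:
  fixes f :: "nat list \<Rightarrow> 'o"
  assumes comp: "computes n \<sigma> A f S" and S: "S \<subseteq> texts \<sigma> n" "marked_texts n \<subseteq> S"
    and f: "\<And>T j. T \<in> marked_texts n \<Longrightarrow> j < n \<Longrightarrow> odd j \<Longrightarrow> f (flip_at j T) \<noteq> f T"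
    and pos: "0 < n" "0 < \<sigma>"
  shows "n div 2 \<le> 36 * nqueries A"
proof -
  define M where "M = marked_texts n"
  define R where "R = (\<lambda>(T, q). (T, flip_at (2 * q + 1) T)) ` (M \<times> {..<n div 2})"
  have odd_pos: "2 * q + 1 < n" "odd (2 * q + 1)" if "q < n div 2" for q
    using that by presburger+
  have fin: "finite M" using S finite_texts unfolding M_def by (meson finite_subset order_trans)
  have "q = q'" if "T \<in> M" "q < n div 2" "q' < n div 2"
    and "flip_at (2 * q + 1) T = flip_at (2 * q' + 1) T" for T q q'
    using flip_at_inj[of T n "2 * q + 1" "2 * q' + 1"] that odd_pos unfolding M_def by simp
  then have "inj_on (\<lambda>(T, q). (T, flip_at (2 * q + 1) T)) (M \<times> {..<n div 2})"
    unfolding inj_on_def by auto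
  then have card_R: "card R = card M * (n div 2)"
    unfolding R_def by (simp add: card_image card_cartesian_product)
  have R_sub: "Domain R \<subseteq> M" "Range R \<subseteq> M"
    unfolding R_def M_def using odd_pos by (auto intro: flip_at_in_marked_texts)
  have "real (card R)
      \<le> 18 * real (nqueries A) * (1 * real (1 * card (Domain R)) + real (1 * card (Range R)) / 1)"
  proof (rule adversary_lower_bound[OF comp S(1) pos])
    show "finite R" unfolding R_def using fin by simp
    show "R \<subseteq> S \<times> S" using R_sub S(2) unfolding M_def by auto
    show "f x \<noteq> f y" if "(x, y) \<in> R" for x y
      using that f odd_pos unfolding R_def M_def by fastforce
    show "card {y. (x, y) \<in> R \<and> x ! i \<noteq> y ! i} \<le> 1" if "i < n" for x i
    proof -
      have "{y. (x, y) \<in> R \<and> x ! i \<noteq> y ! i} \<subseteq> {flip_at i x}"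
        using that odd_pos nth_flip_at_neq_iff unfolding R_def M_def by fastforce
      from card_mono[OF _ this] show ?thesis by simp
    qed
    show "card {x. (x, y) \<in> R \<and> x ! i \<noteq> y ! i} \<le> 1" if "i < n" for y i
    proof -
      have "{x. (x, y) \<in> R \<and> x ! i \<noteq> y ! i} \<subseteq> {flip_at i y}"
        using that odd_pos nth_flip_at_neq_iff flip_at_flip_at unfolding R_def M_def by fastforce
      from card_mono[OF _ this] show ?thesis by simp
    qed
  qed simp
  also have "\<dots> \<le> 18 * real (nqueries A) * (2 * card M)"
    using card_mono[OF fin R_sub(1)] card_mono[OF fin R_sub(2)] by (intro mult_left_mono) auto
  finally have "real (card M) * (n div 2) \<le> real (card M) * (36 * nqueries A)"
    unfolding card_R by (simp add: mult_ac)
  moreover have "0 < card M"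
    using fin marked_texts_nonempty unfolding M_def by (simp add: card_gt_0_iff)
  ultimately show ?thesis by simp
qed

lemma sqrt_query_lower_bound:
  fixes f :: "nat list \<Rightarrow> 'o" and g :: "nat list \<Rightarrow> nat"
  assumes g: "\<And>T. g T \<le> k * length (filter (\<lambda>x. x \<noteq> 0) T) + m"
    and f: "\<And>T T'. f T = f T' \<Longrightarrow> mset T = mset T'"
  shows "\<exists>C c N. 0 < c \<and> (\<forall>n \<ge> N. \<forall>\<sigma> \<ge> n. \<forall>A :: 'o qalg.
    computes n \<sigma> A f {T \<in> texts \<sigma> n. g T \<le> C} \<longrightarrow> c * sqrt (real n) \<le> real (nqueries A))"
proof (rule exI[of _ "k + m"], rule exI[of _ "1/36"], rule exI[of _ 2], intro conjI allI impI)
  fix n \<sigma> :: nat and A :: "'o qalg"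
  assume "2 \<le> n" "n \<le> \<sigma>" and comp: "computes n \<sigma> A f {T \<in> texts \<sigma> n. g T \<le> k + m}"
  have sparse: "g T \<le> k + m" if "length (filter (\<lambda>x. x \<noteq> 0) T) \<le> 1" for T
    using g[of T] mult_le_mono2[OF that, of k] by linarith
  have "sqrt (real n) \<le> 36 * real (nqueries A)"
  proof (rule indicator_query_lower_bound[OF comp])
    show "f (indicator_text n j) \<noteq> f (replicate n 0)" if "j < n" for j
      using f mset_indicator_text_neq[OF that] by blast
  qed (use sparse count_nonzero_indicator_text indicator_text_in_texts[of \<sigma> n] \<open>2 \<le> n\<close> \<open>n \<le> \<sigma>\<close>
    in \<open>auto simp: texts_def\<close>)
  then show "1/36 * sqrt (real n) \<le> real (nqueries A)" by simp
qed simp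

lemma linear_query_lower_bound:
  fixes f :: "nat list \<Rightarrow> 'o" and g :: "nat list \<Rightarrow> nat"
  assumes g: "\<And>T. card (set T) \<le> g T"
    and f: "\<And>T T'. f T = f T' \<Longrightarrow> mset T = mset T'"
  shows "\<exists>\<delta> c N. 0 < \<delta> \<and> 0 < c \<and> (\<forall>n \<ge> N. \<forall>\<sigma> \<ge> n. \<forall>A :: 'o qalg.
    computes n \<sigma> A f {T \<in> texts \<sigma> n. \<delta> * real n \<le> real (g T)} \<longrightarrow> c * real n \<le> real (nqueries A))"
proof (rule exI[of _ "1/2"], rule exI[of _ "1/108"], rule exI[of _ 4], intro conjI allI impI)
  fix n \<sigma> :: nat and A :: "'o qalg"
  assume "4 \<le> n" "n \<le> \<sigma>" and comp: "computes n \<sigma> A f {T \<in> texts \<sigma> n. 1/2 * real n \<le> real (g T)}"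
  have many_symbols: "1/2 * real n \<le> real (g T)" if "T \<in> marked_texts n" for T
    using card_set_marked_text[OF that] g[of T] by linarith
  have "n div 2 \<le> 36 * nqueries A"
  proof (rule marked_query_lower_bound[OF comp])
    show "f (flip_at j T) \<noteq> f T" if "T \<in> marked_texts n" "j < n" "odd j" for T j
      using f mset_flip_at_neq[OF that] by blast
  qed (use many_symbols marked_texts_subset_texts[OF \<open>4 \<le> n\<close> \<open>n \<le> \<sigma>\<close>] \<open>4 \<le> n\<close> \<open>n \<le> \<sigma>\<close> in auto)
  moreover have "n \<le> 3 * (n div 2)" using \<open>4 \<le> n\<close> by presburger
  ultimately show "1/108 * real n \<le> real (nqueries A)" by linarith
qed simp_all

theorem theorem4:
  shows
  "(\<exists>C c N. 0 < c \<and> (\<forall>n \<ge> N. \<forall>\<sigma> \<ge> n. \<forall>A :: nat list list qalg.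
       computes n \<sigma> A lz77 {T \<in> texts \<sigma> n. lz_z T \<le> C}
       \<longrightarrow> c * sqrt (real n) \<le> real (nqueries A)))
 \<and> (\<exists>\<delta> c N. 0 < \<delta> \<and> 0 < c \<and> (\<forall>n \<ge> N. \<forall>\<sigma> \<ge> n. \<forall>A :: nat list list qalg.
       computes n \<sigma> A lz77 {T \<in> texts \<sigma> n. \<delta> * real n \<le> real (lz_z T)}
       \<longrightarrow> c * real n \<le> real (nqueries A)))
 \<and> (\<exists>C c N. 0 < c \<and> (\<forall>n \<ge> N. \<forall>\<sigma> \<ge> n. \<forall>A :: (nat \<times> nat) list qalg.
       computes n \<sigma> A rlbwt {T \<in> texts \<sigma> n. bwt_r T \<le> C}
       \<longrightarrow> c * sqrt (real n) \<le> real (nqueries A)))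
 \<and> (\<exists>\<delta> c N. 0 < \<delta> \<and> 0 < c \<and> (\<forall>n \<ge> N. \<forall>\<sigma> \<ge> n. \<forall>A :: (nat \<times> nat) list qalg.
       computes n \<sigma> A rlbwt {T \<in> texts \<sigma> n. \<delta> * real n \<le> real (bwt_r T)}
       \<longrightarrow> c * real n \<le> real (nqueries A)))"
  using sqrt_query_lower_bound[OF lz_z_le_count lz77_eq_imp_mset_eq]
    linear_query_lower_bound[OF card_set_le_lz_z lz77_eq_imp_mset_eq]
    sqrt_query_lower_bound[OF bwt_r_le_count rlbwt_eq_imp_mset_eq]
    linear_query_lower_bound[OF card_set_le_bwt_r rlbwt_eq_imp_mset_eq]
  by (intro conjI) assumption+

end
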